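(* Let $a>0$, $q\neq0$, $p\in(4,6)$. For every $t>0$ and every $u\in\mathcal{E}_r$, $$I_a(u)-I_a(t^2u(t\,\cdot))\ge\frac{1-t^3}{3}J_a(u).$$
   Context: $D^{1,2}(\mathbb{R}^3)=\{u\in L^6(\mathbb{R}^3):|\nabla u|\in L^2(\mathbb{R}^3)\}$. $\mathcal{K}_a(x)=\frac{1-e^{-|x|/a}}{|x|}$, $V(f,g)=\int\int\mathcal{K}_a(x-y)f(x)g(y)\,dx\,dy$, $\mathcal{E}_r$ the set of radial $u\in D^{1,2}(\mathbb{R}^3)$ with $V(u^2,u^2)<\infty$. $I_a(u)=\frac12\|\nabla u\|_2^2+\frac{q^2}{4}V(u^2,u^2)-\frac1p\|u\|_p^p$ and $$J_a(u)=\frac32\|\nabla u\|_2^2-\frac{2p-3}{p}\|u\|_p^p+\frac{3q^2}{4}\int_{\mathbb{R}^3}\int_{\mathbb{R}^3}\frac{1-e^{-\frac{|x-y|}{a}}-\frac{|x-y|}{3a}e^{-\frac{|x-y|}{a}}}{|x-y|}u^2(x)u^2(y)\,dx\,dy.$$ *)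

theory Defs
  imports "HOL-Analysis.Analysis"
begin

type_synonym R3 = "real ^ 3"

coinductive smooth_fn :: "('a::euclidean_space \<Rightarrow> real) \<Rightarrow> bool" where
  "(\<forall>x. f differentiable (at x)) \<Longrightarrow>
   (\<forall>v. smooth_fn (\<lambda>x. frechet_derivative f (at x) v)) \<Longrightarrow> smooth_fn f"

definition test_fn :: "('a::euclidean_space \<Rightarrow> real) \<Rightarrow> bool" where
  "test_fn \<phi> \<longleftrightarrow> smooth_fn \<phi> \<and> bounded {x. \<phi> x \<noteq> 0}"

definition weak_grad :: "(R3 \<Rightarrow> real) \<Rightarrow> (R3 \<Rightarrow> R3) \<Rightarrow> bool" where
  "weak_grad u g \<longleftrightarrow>
     (\<forall>K. compact K \<longrightarrow> set_integrable lborel K u \<and> set_integrable lborel K g) \<and>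
     (\<forall>\<phi>. test_fn \<phi> \<longrightarrow> (\<forall>i\<in>Basis.
        (\<integral>x. u x * frechet_derivative \<phi> (at x) i \<partial>lborel) =
        - (\<integral>x. (g x \<bullet> i) * \<phi> x \<partial>lborel)))"

definition D12 :: "(R3 \<Rightarrow> real) \<Rightarrow> bool" where
  "D12 u \<longleftrightarrow> u \<in> borel_measurable lborel \<and> integrable lborel (\<lambda>x. \<bar>u x\<bar> ^ 6) \<and>
     (\<exists>g. weak_grad u g \<and> g \<in> borel_measurable lborel \<and>
          integrable lborel (\<lambda>x. (norm (g x))\<^sup>2))"

definition grad :: "(R3 \<Rightarrow> real) \<Rightarrow> R3 \<Rightarrow> R3" where
  "grad u = (SOME g. weak_grad u g \<and> g \<in> borel_measurable lborel \<and>
                     integrable lborel (\<lambda>x. (norm (g x))\<^sup>2))"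

definition radial :: "(R3 \<Rightarrow> real) \<Rightarrow> bool" where
  "radial u \<longleftrightarrow> (\<forall>x y. norm x = norm y \<longrightarrow> u x = u y)"

definition Kern :: "real \<Rightarrow> R3 \<Rightarrow> real" where
  "Kern a z = (1 - exp (- norm z / a)) / norm z"

definition Vpot :: "real \<Rightarrow> (R3 \<Rightarrow> real) \<Rightarrow> (R3 \<Rightarrow> real) \<Rightarrow> real" where
  "Vpot a f g = (\<integral>z. Kern a (fst z - snd z) * f (fst z) * g (snd z) \<partial>(lborel \<Otimes>\<^sub>M lborel))"

definition Er :: "real \<Rightarrow> (R3 \<Rightarrow> real) \<Rightarrow> bool" where
  "Er a u \<longleftrightarrow> D12 u \<and> radial u \<and>
     (\<integral>\<^sup>+z. ennreal (Kern a (fst z - snd z) * (u (fst z))\<^sup>2 * (u (snd z))\<^sup>2)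
        \<partial>(lborel \<Otimes>\<^sub>M lborel)) < \<infinity>"

definition grad_sq :: "(R3 \<Rightarrow> real) \<Rightarrow> real" where
  "grad_sq u = (\<integral>x. (norm (grad u x))\<^sup>2 \<partial>lborel)"

definition Lp_pow :: "real \<Rightarrow> (R3 \<Rightarrow> real) \<Rightarrow> real" where
  "Lp_pow p u = (\<integral>x. \<bar>u x\<bar> powr p \<partial>lborel)"

definition I_a :: "real \<Rightarrow> real \<Rightarrow> real \<Rightarrow> (R3 \<Rightarrow> real) \<Rightarrow> real" where
  "I_a a q p u = 1/2 * grad_sq u + q\<^sup>2 / 4 * Vpot a (\<lambda>x. (u x)\<^sup>2) (\<lambda>x. (u x)\<^sup>2)
                 - 1/p * Lp_pow p u"

definition KernJ :: "real \<Rightarrow> R3 \<Rightarrow> real" where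
  "KernJ a z = (1 - exp (- norm z / a) - norm z / (3 * a) * exp (- norm z / a)) / norm z"

definition J_a :: "real \<Rightarrow> real \<Rightarrow> real \<Rightarrow> (R3 \<Rightarrow> real) \<Rightarrow> real" where
  "J_a a q p u = 3/2 * grad_sq u - (2*p - 3) / p * Lp_pow p u
     + 3 * q\<^sup>2 / 4 * (\<integral>z. KernJ a (fst z - snd z) * (u (fst z))\<^sup>2 * (u (snd z))\<^sup>2
                         \<partial>(lborel \<Otimes>\<^sub>M lborel))"

end

theory Submission
  imports Defs "HOL-Computational_Algebra.Polynomial"
begin

text \<open>Write \<open>u\<^sub>t x = t^2 u (t x)\<close>. Dilation gives \<open>\<parallel>\<nabla>u\<^sub>t\<parallel>\<^sub>2^2 = t^3 \<parallel>\<nabla>u\<parallel>\<^sub>2^2\<close>,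
  \<open>\<parallel>u\<^sub>t\<parallel>\<^sub>p^p = t^(2p - 3) \<parallel>u\<parallel>\<^sub>p^p\<close> and \<open>V\<^sub>a(u\<^sub>t^2, u\<^sub>t^2) = t^3 V\<^sub>t\<^sub>a(u^2, u^2)\<close>: the
  dilation only rescales the screening length of the kernel. Hence
  \<open>I\<^sub>a(u) - I\<^sub>a(u\<^sub>t) - (1 - t^3)/3 J\<^sub>a(u)\<close> has no gradient term left; the \<open>L^p\<close> term is
  \<open>\<parallel>u\<parallel>\<^sub>p^p / p\<close> times \<open>s^\<alpha> - 1 - \<alpha> (s - 1)\<close> with \<open>s = t^3\<close>, \<open>\<alpha> = (2p - 3)/3 \<ge> 1\<close>,
  which is nonnegative by convexity, and the Coulomb term is the double integral of
  \<open>u^2(x) u^2(y)\<close> against the kernel \<open>K\<^sub>a - t^3 K\<^sub>t\<^sub>a - (1 - t^3) K\<^sup>J\<^sub>a\<close>, which is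
  pointwise nonnegative by \<open>exp x \<ge> 1 + x\<close>.

  Since the gradient is only determined almost everywhere (via a choice), computing
  \<open>\<parallel>\<nabla>u\<^sub>t\<parallel>\<^sub>2\<close> needs uniqueness of weak gradients; it follows by testing against smooth
  bumps that converge to indicators of boxes.\<close>

section \<open>Smooth functions\<close>

lemma smooth_fnD:
  assumes "smooth_fn f"
  shows "f differentiable (at x)" "smooth_fn (\<lambda>x. frechet_derivative f (at x) v)"
  using assms by (auto elim: smooth_fn.cases)

lemma smooth_fn_const: "smooth_fn (\<lambda>x::'a::euclidean_space. c)"
proof -
  have "smooth_fn f" if "\<exists>c. f = (\<lambda>x::'a. c)" for f
    using that by (coinduction arbitrary: f) auto
  then show ?thesis by blast
qed

text \<open>The derivative of a product is a sum of products, so closure under products has to be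
  proved by a coinduction over this larger class.\<close>

inductive smooth_sum_of_products :: "('a::euclidean_space \<Rightarrow> real) \<Rightarrow> bool" where
  mult: "smooth_fn f \<Longrightarrow> smooth_fn g \<Longrightarrow> smooth_sum_of_products (\<lambda>x. f x * g x)"
| add: "smooth_sum_of_products f \<Longrightarrow> smooth_sum_of_products g \<Longrightarrow>
    smooth_sum_of_products (\<lambda>x. f x + g x)"

lemma smooth_sum_of_products_derivative:
  assumes "smooth_sum_of_products h"
  shows "h differentiable (at x) \<and> smooth_sum_of_products (\<lambda>x. frechet_derivative h (at x) v)"
  using assms
proof (induction arbitrary: x rule: smooth_sum_of_products.induct)
  case (mult f g)
  have d: "((\<lambda>x. f x * g x) has_derivative
      (\<lambda>v. f x * frechet_derivative g (at x) v + frechet_derivative f (at x) v * g x)) (at x)" for x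
    using mult smooth_fnD(1) by (intro has_derivative_mult) (auto simp: frechet_derivative_works)
  have "(\<lambda>x. frechet_derivative (\<lambda>x. f x * g x) (at x) v) =
      (\<lambda>x. f x * frechet_derivative g (at x) v + frechet_derivative f (at x) v * g x)"
    by (simp add: frechet_derivative_at[OF d, symmetric])
  then show ?case
    using d mult unfolding differentiable_def
    by (auto intro!: smooth_sum_of_products.intros smooth_fnD(2))
next
  case (add f g)
  have d: "((\<lambda>x. f x + g x) has_derivative
      (\<lambda>v. frechet_derivative f (at x) v + frechet_derivative g (at x) v)) (at x)" for x
    using add by (intro has_derivative_add) (auto simp: frechet_derivative_works)
  have "(\<lambda>x. frechet_derivative (\<lambda>x. f x + g x) (at x) v) =
      (\<lambda>x. frechet_derivative f (at x) v + frechet_derivative g (at x) v)"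
    by (simp add: frechet_derivative_at[OF d, symmetric])
  then show ?case
    using d add unfolding differentiable_def by (auto intro!: smooth_sum_of_products.add)
qed

lemma smooth_sum_of_products_imp_smooth_fn: "smooth_sum_of_products h \<Longrightarrow> smooth_fn h"
  by (coinduction arbitrary: h) (use smooth_sum_of_products_derivative in blast)

lemma smooth_fn_mult: "smooth_fn f \<Longrightarrow> smooth_fn g \<Longrightarrow> smooth_fn (\<lambda>x. f x * g x)"
  by (rule smooth_sum_of_products_imp_smooth_fn, rule smooth_sum_of_products.mult)

lemma smooth_fn_prod:
  assumes "finite I" "\<And>i. i \<in> I \<Longrightarrow> smooth_fn (f i)"
  shows "smooth_fn (\<lambda>x::'a::euclidean_space. \<Prod>i\<in>I. f i x)"
  using assms by (induction I rule: finite_induct) (auto simp: smooth_fn_const smooth_fn_mult)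

lemma has_derivative_compose_scaleR:
  assumes "\<phi> differentiable (at (c *\<^sub>R y))"
  shows "((\<lambda>y. \<phi> (c *\<^sub>R y)) has_derivative (\<lambda>v. frechet_derivative \<phi> (at (c *\<^sub>R y)) (c *\<^sub>R v))) (at y)"
  by (rule has_derivative_compose[where f = "\<lambda>x. c *\<^sub>R x" and g = \<phi>, unfolded o_def])
     (auto intro!: derivative_eq_intros simp: assms frechet_derivative_works[symmetric])

lemma frechet_derivative_compose_scaleR:
  assumes "\<phi> differentiable (at (c *\<^sub>R y))"
  shows "frechet_derivative (\<lambda>y. \<phi> (c *\<^sub>R y)) (at y) v = c * frechet_derivative \<phi> (at (c *\<^sub>R y)) v"
proof -
  have "frechet_derivative (\<lambda>y. \<phi> (c *\<^sub>R y)) (at y) v = frechet_derivative \<phi> (at (c *\<^sub>R y)) (c *\<^sub>R v)"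
    by (simp add: frechet_derivative_at[OF has_derivative_compose_scaleR[OF assms], symmetric])
  also have "\<dots> = c * frechet_derivative \<phi> (at (c *\<^sub>R y)) v"
    using linear_frechet_derivative[OF assms] by (simp add: linear_scale)
  finally show ?thesis .
qed

lemma smooth_fn_compose_scaleR:
  assumes "smooth_fn \<phi>"
  shows "smooth_fn (\<lambda>x::'a::euclidean_space. \<phi> (c *\<^sub>R x))"
proof -
  have "smooth_fn h" if "\<exists>\<phi>. smooth_fn \<phi> \<and> h = (\<lambda>x::'a. \<phi> (c *\<^sub>R x))" for h
    using that
  proof (coinduction arbitrary: h)
    case (smooth_fn h)
    then obtain \<phi> where \<phi>: "smooth_fn \<phi>" and h: "h = (\<lambda>x::'a. \<phi> (c *\<^sub>R x))" by blast
    have "h differentiable (at x)" for x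
      unfolding h differentiable_def using has_derivative_compose_scaleR smooth_fnD(1)[OF \<phi>] by blast
    moreover have "(\<lambda>x. frechet_derivative h (at x) v) =
        (\<lambda>x. (\<lambda>y. c * frechet_derivative \<phi> (at y) v) (c *\<^sub>R x))" for v
      unfolding h using smooth_fnD(1)[OF \<phi>] by (simp add: frechet_derivative_compose_scaleR)
    moreover have "smooth_fn (\<lambda>y. c * frechet_derivative \<phi> (at y) v)" for v
      using \<phi> by (intro smooth_fn_mult smooth_fn_const smooth_fnD(2))
    ultimately show ?case by blast
  qed
  then show ?thesis using assms by blast
qed

definition smooth_real :: "(real \<Rightarrow> real) \<Rightarrow> bool" where
  "smooth_real f \<longleftrightarrow> (\<exists>D. D 0 = f \<and> (\<forall>n s. (D n has_real_derivative D (Suc n) s) (at s)))"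

lemma smooth_fn_compose_affine_coordinate:
  assumes "smooth_real f"
  shows "smooth_fn (\<lambda>x::'a::euclidean_space. f (\<alpha> * (x \<bullet> i) + \<beta>))"
proof -
  obtain D where D0: "D 0 = f" and D: "\<And>n s. (D n has_real_derivative D (Suc n) s) (at s)"
    using assms unfolding smooth_real_def by blast
  have "smooth_fn h" if "\<exists>w n. h = (\<lambda>x::'a. w * D n (\<alpha> * (x \<bullet> i) + \<beta>))" for h
    using that
  proof (coinduction arbitrary: h)
    case (smooth_fn h)
    then obtain w n where h: "h = (\<lambda>x::'a. w * D n (\<alpha> * (x \<bullet> i) + \<beta>))" by blast
    have "(h has_derivative (\<lambda>v. (w * \<alpha> * (v \<bullet> i)) * D (Suc n) (\<alpha> * (x \<bullet> i) + \<beta>))) (at x)" for x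
    proof -
      have "((\<lambda>x::'a. D n (\<alpha> * (x \<bullet> i) + \<beta>)) has_derivative
          (\<lambda>v. D (Suc n) (\<alpha> * (x \<bullet> i) + \<beta>) * (\<alpha> * (v \<bullet> i)))) (at x)"
        by (rule has_derivative_compose[where f = "\<lambda>x. \<alpha> * (x \<bullet> i) + \<beta>" and g = "D n", unfolded o_def])
           (auto intro!: derivative_eq_intros D[unfolded has_field_derivative_def])
      then show ?thesis
        unfolding h by (auto intro!: derivative_eq_intros simp: algebra_simps)
    qed
    note d = this
    have "h differentiable (at x)" for x
      using d unfolding differentiable_def by blast
    moreover have "(\<lambda>x. frechet_derivative h (at x) v) =
        (\<lambda>x. (w * \<alpha> * (v \<bullet> i)) * D (Suc n) (\<alpha> * (x \<bullet> i) + \<beta>))" for v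
      by (simp add: frechet_derivative_at[OF d, symmetric])
    ultimately show ?case by blast
  qed
  then have "smooth_fn (\<lambda>x::'a. 1 * D 0 (\<alpha> * (x \<bullet> i) + \<beta>))" by blast
  then show ?thesis by (simp add: D0)
qed

lemma smooth_fn_borel_measurable: "smooth_fn f \<Longrightarrow> f \<in> borel_measurable borel"
  by (intro borel_measurable_continuous_onI continuous_at_imp_continuous_on ballI
      differentiable_imp_continuous_within smooth_fnD(1))

lemma borel_measurable_frechet_derivative_smooth_fn [measurable]:
  "smooth_fn \<phi> \<Longrightarrow> (\<lambda>x. frechet_derivative \<phi> (at x) v) \<in> borel_measurable borel"
  by (rule smooth_fn_borel_measurable[OF smooth_fnD(2)])

section \<open>Bump functions\<close>

definition exp_neg_inverse :: "real \<Rightarrow> real" where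
  "exp_neg_inverse y = (if 0 < y then exp (- inverse y) else 0)"

text \<open>On \<open>y > 0\<close> the \<open>n\<close>-th derivative of \<open>exp (- 1/y)\<close> is \<open>P\<^sub>n (1/y) exp (- 1/y)\<close>
  with \<open>P\<^sub>n\<^sub>+\<^sub>1 z = z\<^sup>2 (P\<^sub>n z - P\<^sub>n' z)\<close>.\<close>

fun exp_neg_inverse_poly :: "nat \<Rightarrow> real poly" where
  "exp_neg_inverse_poly 0 = 1"
| "exp_neg_inverse_poly (Suc n) =
    [:0, 0, 1:] * (exp_neg_inverse_poly n - pderiv (exp_neg_inverse_poly n))"

definition exp_neg_inverse_deriv :: "nat \<Rightarrow> real \<Rightarrow> real" where
  "exp_neg_inverse_deriv n y =
    (if 0 < y then poly (exp_neg_inverse_poly n) (inverse y) * exp (- inverse y) else 0)"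

lemma poly_times_exp_neg_tendsto_0: "((\<lambda>z. poly Q z * exp (- z)) \<longlongrightarrow> (0::real)) at_top"
proof -
  have "poly Q z * exp (- z) = (\<Sum>i\<le>degree Q. coeff Q i * (z ^ i / exp z))" for z
    by (simp add: poly_altdef sum_distrib_right exp_minus divide_inverse mult.assoc)
  moreover have "((\<lambda>z. \<Sum>i\<le>degree Q. coeff Q i * (z ^ i / exp z)) \<longlongrightarrow> (\<Sum>i\<le>degree Q. coeff Q i * 0)) at_top"
    by (intro tendsto_sum tendsto_mult tendsto_const tendsto_power_div_exp_0)
  ultimately show ?thesis by simp
qed

lemma has_real_derivative_exp_neg_inverse_deriv_pos:
  assumes "y > 0"
  shows "((\<lambda>y. poly (exp_neg_inverse_poly n) (inverse y) * exp (- inverse y)) has_real_derivative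
     poly (exp_neg_inverse_poly (Suc n)) (inverse y) * exp (- inverse y)) (at y)"
proof -
  have inv: "(inverse has_real_derivative - (inverse y ^ 2)) (at y)"
    using DERIV_inverse[of y] assms by (simp add: power2_eq_square)
  have "((\<lambda>y. poly (exp_neg_inverse_poly n) (inverse y)) has_real_derivative
      - (inverse y ^ 2) * poly (pderiv (exp_neg_inverse_poly n)) (inverse y)) (at y)"
    by (rule has_field_derivative_poly[OF inv])
  moreover have "((\<lambda>y. exp (- inverse y)) has_real_derivative exp (- inverse y) * (inverse y ^ 2)) (at y)"
    using DERIV_chain2[OF DERIV_exp DERIV_minus[OF inv]] by simp
  ultimately show ?thesis
    by (rule DERIV_cong[OF DERIV_mult]) (simp add: algebra_simps power2_eq_square)
qed

lemma has_real_derivative_exp_neg_inverse_deriv: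
  "(exp_neg_inverse_deriv n has_real_derivative exp_neg_inverse_deriv (Suc n) s) (at s)"
proof -
  consider "s > 0" | "s < 0" | "s = 0" by linarith
  then show ?thesis
  proof cases
    case 1
    show ?thesis
    proof (rule has_field_derivative_transform_within_open[OF _ open_greaterThan[of 0]])
      show "((\<lambda>y. poly (exp_neg_inverse_poly n) (inverse y) * exp (- inverse y)) has_real_derivative
          exp_neg_inverse_deriv (Suc n) s) (at s)"
        using has_real_derivative_exp_neg_inverse_deriv_pos[OF 1, of n] 1
        by (simp add: exp_neg_inverse_deriv_def)
    qed (use 1 in \<open>auto simp: exp_neg_inverse_deriv_def\<close>)
  next
    case 2
    have "(exp_neg_inverse_deriv n has_real_derivative 0) (at s)"
      by (rule has_field_derivative_transform_within_open[OF DERIV_const open_lessThan[of 0]])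
         (use 2 in \<open>auto simp: exp_neg_inverse_deriv_def\<close>)
    then show ?thesis using 2 by (simp add: exp_neg_inverse_deriv_def)
  next
    case 3
    have "((\<lambda>y. poly ([:0, 1:] * exp_neg_inverse_poly n) (inverse y) * exp (- inverse y))
        \<longlongrightarrow> 0) (at_right 0)"
      by (rule filterlim_compose[OF poly_times_exp_neg_tendsto_0 filterlim_inverse_at_top_right])
    moreover have "\<forall>\<^sub>F y in at_right 0.
        poly ([:0, 1:] * exp_neg_inverse_poly n) (inverse y) * exp (- inverse y) =
        exp_neg_inverse_deriv n y / y"
      by (rule eventually_mono[OF eventually_at_right_less])
         (auto simp: exp_neg_inverse_deriv_def field_simps)
    ultimately have right: "((\<lambda>y. exp_neg_inverse_deriv n y / y) \<longlongrightarrow> 0) (at_right 0)"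
      by (rule Lim_transform_eventually)
    have "\<forall>\<^sub>F y in at_left 0. 0 = exp_neg_inverse_deriv n y / y"
      by (rule eventually_mono[OF eventually_at_left_real[of "-1" 0]])
         (auto simp: exp_neg_inverse_deriv_def)
    then have left: "((\<lambda>y. exp_neg_inverse_deriv n y / y) \<longlongrightarrow> 0) (at_left 0)"
      by (rule Lim_transform_eventually[OF tendsto_const])
    have "((\<lambda>y. (exp_neg_inverse_deriv n y - exp_neg_inverse_deriv n 0) / (y - 0)) \<longlongrightarrow> 0) (at 0)"
      using left right by (simp add: exp_neg_inverse_deriv_def filterlim_at_split)
    then show ?thesis
      using 3 by (simp add: has_field_derivative_iff exp_neg_inverse_deriv_def)
  qed
qed

lemma smooth_real_exp_neg_inverse: "smooth_real exp_neg_inverse"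
  unfolding smooth_real_def
proof (intro exI conjI allI)
  show "exp_neg_inverse_deriv 0 = exp_neg_inverse"
    by (auto simp: exp_neg_inverse_deriv_def exp_neg_inverse_def)
qed (rule has_real_derivative_exp_neg_inverse_deriv)

lemma exp_neg_inverse_nonneg: "0 \<le> exp_neg_inverse y"
  and exp_neg_inverse_le_1: "exp_neg_inverse y \<le> 1"
  and exp_neg_inverse_eq_0_iff: "exp_neg_inverse y = 0 \<longleftrightarrow> y \<le> 0"
  by (auto simp: exp_neg_inverse_def)

lemma exp_neg_inverse_tendsto_1:
  assumes "d > 0"
  shows "(\<lambda>n. exp_neg_inverse (real (Suc n) * d)) \<longlonglongrightarrow> 1"
proof -
  have "(\<lambda>n. exp (- (inverse (real (Suc n)) * inverse d))) \<longlonglongrightarrow> exp (- (0 * inverse d))"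
    by (intro tendsto_exp tendsto_minus tendsto_mult LIMSEQ_inverse_real_of_nat tendsto_const)
  then show ?thesis
    using assms by (simp add: exp_neg_inverse_def)
qed

definition box_bump :: "nat \<Rightarrow> 'a::euclidean_space \<Rightarrow> 'a \<Rightarrow> 'a \<Rightarrow> real" where
  "box_bump n a b x = (\<Prod>i\<in>Basis.
     exp_neg_inverse (real (Suc n) * (x \<bullet> i) + - real (Suc n) * (a \<bullet> i)) *
     exp_neg_inverse (- real (Suc n) * (x \<bullet> i) + real (Suc n) * (b \<bullet> i)))"

lemma box_bump_eq:
  "box_bump n a b x = (\<Prod>i\<in>Basis.
     exp_neg_inverse (real (Suc n) * (x \<bullet> i - a \<bullet> i)) *
     exp_neg_inverse (real (Suc n) * (b \<bullet> i - x \<bullet> i)))"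
  unfolding box_bump_def by (simp add: algebra_simps)

lemma smooth_fn_box_bump: "smooth_fn (box_bump n a b)"
  unfolding box_bump_def[abs_def]
  by (intro smooth_fn_prod finite_Basis smooth_fn_mult
      smooth_fn_compose_affine_coordinate smooth_real_exp_neg_inverse)

lemma box_bump_eq_0:
  assumes "x \<notin> box a b"
  shows "box_bump n a b x = 0"
proof -
  obtain i where i: "i \<in> Basis" and "x \<bullet> i \<le> a \<bullet> i \<or> b \<bullet> i \<le> x \<bullet> i"
    using assms by (auto simp: mem_box not_less)
  then have "exp_neg_inverse (real (Suc n) * (x \<bullet> i - a \<bullet> i)) *
      exp_neg_inverse (real (Suc n) * (b \<bullet> i - x \<bullet> i)) = 0"
    by (auto simp: exp_neg_inverse_eq_0_iff mult_nonneg_nonpos)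
  then show ?thesis
    unfolding box_bump_eq using i by (intro prod_zero) auto
qed

lemma test_fn_box_bump: "test_fn (box_bump n a b)"
proof -
  have "{x. box_bump n a b x \<noteq> 0} \<subseteq> box a b"
    using box_bump_eq_0 by blast
  then show ?thesis
    unfolding test_fn_def using smooth_fn_box_bump bounded_box bounded_subset by blast
qed

lemma box_bump_nonneg: "0 \<le> box_bump n a b x"
  by (auto simp: box_bump_def intro!: prod_nonneg mult_nonneg_nonneg exp_neg_inverse_nonneg)

lemma box_bump_le_1: "box_bump n a b x \<le> 1"
  unfolding box_bump_def
  by (intro prod_le_1) (auto intro: mult_le_one exp_neg_inverse_le_1 exp_neg_inverse_nonneg mult_nonneg_nonneg)

lemma box_bump_tendsto_indicator: "(\<lambda>n. box_bump n a b x) \<longlonglongrightarrow> indicator (box a b) x"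
proof (cases "x \<in> box a b")
  case True
  then have "(\<lambda>n. box_bump n a b x) \<longlonglongrightarrow> (\<Prod>i\<in>(Basis::'a set). 1 * 1)"
    unfolding box_bump_eq
    by (intro tendsto_prod tendsto_mult exp_neg_inverse_tendsto_1) (auto simp: mem_box)
  then show ?thesis using True by simp
qed (simp add: box_bump_eq_0)

lemma borel_measurable_box_bump [measurable]: "box_bump n a b \<in> borel_measurable borel"
  by (rule smooth_fn_borel_measurable[OF smooth_fn_box_bump])

lemma abs_mult_box_bump_le: "\<bar>h x * box_bump n a b x\<bar> \<le> \<bar>indicator (cbox a b) x * h x\<bar>"
proof (cases "x \<in> box a b")
  case True
  then have "x \<in> cbox a b" using box_subset_cbox by blast
  then show ?thesis
    using box_bump_nonneg[of n a b x] box_bump_le_1[of n a b x] by (simp add: abs_mult mult_left_le)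
qed (simp add: box_bump_eq_0)

lemma integrable_mult_box_bump:
  fixes h :: "'a::euclidean_space \<Rightarrow> real"
  assumes "h \<in> borel_measurable borel" "integrable lborel (\<lambda>x. indicator (cbox a b) x * h x)"
  shows "integrable lborel (\<lambda>x. h x * box_bump n a b x)"
  using assms(2) by (rule Bochner_Integration.integrable_bound)
    (use assms(1) in \<open>auto intro!: abs_mult_box_bump_le\<close>)

lemma integral_mult_box_bump_tendsto:
  fixes h :: "'a::euclidean_space \<Rightarrow> real"
  assumes [measurable]: "h \<in> borel_measurable borel"
    and "integrable lborel (\<lambda>x. indicator (cbox a b) x * h x)"
  shows "(\<lambda>n. \<integral>x. h x * box_bump n a b x \<partial>lborel) \<longlonglongrightarrow> (\<integral>x. indicator (box a b) x * h x \<partial>lborel)"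
proof (rule integral_dominated_convergence[where w = "\<lambda>x. \<bar>indicator (cbox a b) x * h x\<bar>"])
  show "AE x in lborel. (\<lambda>n. h x * box_bump n a b x) \<longlonglongrightarrow> indicator (box a b) x * h x"
    by (intro AE_I2) (metis mult.commute tendsto_mult_left box_bump_tendsto_indicator)
qed (use assms in \<open>auto intro!: abs_mult_box_bump_le\<close>)

section \<open>Functions with vanishing integrals over boxes\<close>

lemma AE_eq_0_if_integrable_box_integrals_eq_0:
  fixes h :: "'a::euclidean_space \<Rightarrow> real"
  assumes h: "integrable lborel h"
    and box: "\<And>a b. (\<integral>x. indicator (box a b) x * h x \<partial>lborel) = 0"
  shows "AE x in lborel. h x = 0"
proof -
  have [measurable]: "h \<in> borel_measurable borel"
    using h by auto
  define part where "part s = density lborel (\<lambda>x. ennreal (max 0 (s * h x)))" for s :: real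
  have integrable_part: "integrable lborel (\<lambda>x. indicator A x * max 0 (s * h x))"
    if "A \<in> sets borel" "s = 1 \<or> s = -1" for A s
    using h by (rule Bochner_Integration.integrable_bound)
      (use that in \<open>auto simp: indicator_def abs_mult\<close>)
  have emeasure_part: "emeasure (part s) A = ennreal (\<integral>x. indicator A x * max 0 (s * h x) \<partial>lborel)"
    if "A \<in> sets borel" "s = 1 \<or> s = -1" for A s
  proof -
    have "emeasure (part s) A = (\<integral>\<^sup>+x. ennreal (indicator A x * max 0 (s * h x)) \<partial>lborel)"
      unfolding part_def using that(1)
      by (subst emeasure_density) (auto intro!: nn_integral_cong simp: indicator_def)
    also have "\<dots> = ennreal (\<integral>x. indicator A x * max 0 (s * h x) \<partial>lborel)"
      by (rule nn_integral_eq_integral[OF integrable_part[OF that]]) auto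
    finally show ?thesis .
  qed
  have "part 1 = part (-1)"
  proof (rule measure_eqI_generator_eq[where E = "range (\<lambda>(a, b). box a b)" and \<Omega> = UNIV
        and A = "\<lambda>i. box (- (real i *\<^sub>R One)) (real i *\<^sub>R One)"])
    show "emeasure (part 1) X = emeasure (part (-1)) X" if X: "X \<in> range (\<lambda>(a, b). box a b)" for X
    proof -
      obtain a b where X: "X = box a b" using X by auto
      have X_borel: "X \<in> sets borel" by (simp add: X)
      have "(\<integral>x. indicator X x * max 0 (1 * h x) \<partial>lborel) - (\<integral>x. indicator X x * max 0 (-1 * h x) \<partial>lborel)
          = (\<integral>x. indicator X x * max 0 (1 * h x) - indicator X x * max 0 (-1 * h x) \<partial>lborel)"
        using X_borel by (intro Bochner_Integration.integral_diff[symmetric] integrable_part) auto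
      also have "\<dots> = (\<integral>x. indicator (box a b) x * h x \<partial>lborel)"
        by (intro Bochner_Integration.integral_cong) (auto simp: X indicator_def)
      finally have "(\<integral>x. indicator X x * max 0 (1 * h x) \<partial>lborel) =
          (\<integral>x. indicator X x * max 0 (-1 * h x) \<partial>lborel)"
        using box[of a b] by simp
      then show ?thesis
        using X_borel by (simp add: emeasure_part)
    qed
    show "emeasure (part 1) (box (- (real i *\<^sub>R One)) (real i *\<^sub>R One)) \<noteq> \<infinity>" for i
      by (subst emeasure_part) auto
  qed (auto simp: Int_stable_def box_Int_box part_def borel_eq_box UN_box_eq_UNIV)
  then have "AE x in lborel. ennreal (max 0 (h x)) = ennreal (max 0 (- h x))"
    unfolding part_def by (intro sigma_finite_measure.density_unique[OF sigma_finite_lborel]) auto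
  then show ?thesis
    by eventually_elim (auto simp: max_def split: if_splits)
qed

lemma AE_eq_0_if_box_integrals_eq_0:
  fixes h :: "'a::euclidean_space \<Rightarrow> real"
  assumes [measurable]: "h \<in> borel_measurable borel"
    and local: "\<And>a b. integrable lborel (\<lambda>x. indicator (cbox a b) x * h x)"
    and box: "\<And>a b. (\<integral>x. indicator (box a b) x * h x \<partial>lborel) = 0"
  shows "AE x in lborel. h x = 0"
proof -
  define B where "B i = box (- (real i *\<^sub>R One)) (real i *\<^sub>R One :: 'a)" for i
  have "AE x in lborel. indicator (B i) x * h x = 0" for i
  proof (rule AE_eq_0_if_integrable_box_integrals_eq_0)
    show "integrable lborel (\<lambda>x. indicator (B i) x * h x)"
      using local by (rule Bochner_Integration.integrable_bound)
        (auto simp: B_def indicator_def dest!: box_subset_cbox[THEN subsetD])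
    show "(\<integral>x. indicator (box a b) x * (indicator (B i) x * h x) \<partial>lborel) = 0" for a b
    proof -
      obtain c d where cd: "box a b \<inter> B i = box c d"
        unfolding B_def using box_Int_box by blast
      have "indicator (box a b) x * (indicator (B i) x * h x) = indicator (box c d) x * h x" for x
        unfolding cd[symmetric] by (simp add: indicator_def)
      then show ?thesis
        by (simp only: box)
    qed
  qed
  then have "AE x in lborel. \<forall>i. indicator (B i) x * h x = 0"
    unfolding AE_all_countable by blast
  then show ?thesis
    by eventually_elim (use UN_box_eq_UNIV in \<open>auto simp: B_def indicator_def\<close>)
qed

section \<open>Dilations\<close>

lemma integrable_scaleR_iff:
  fixes f :: "'a \<Rightarrow> 'b::{banach, second_countable_topology}"
  assumes "c \<noteq> 0"
  shows "integrable M (\<lambda>x. c *\<^sub>R f x) \<longleftrightarrow> integrable M f"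
proof
  assume "integrable M (\<lambda>x. c *\<^sub>R f x)"
  then have "integrable M (\<lambda>x. (1 / c) *\<^sub>R (c *\<^sub>R f x))" by (rule integrable_scaleR_right)
  then show "integrable M f" using assms by simp
qed (rule integrable_scaleR_right)

lemma lborel_eq_density_distr_scaleR:
  assumes "c \<noteq> 0"
  shows "(lborel :: 'a::euclidean_space measure) =
    density (distr lborel borel (\<lambda>x. c *\<^sub>R x)) (\<lambda>_. ennreal (\<bar>c\<bar> ^ DIM('a)))"
  using lborel_affine[OF assms, of 0] by simp

lemma integrable_dilation_iff:
  fixes f :: "'a::euclidean_space \<Rightarrow> 'b::{banach, second_countable_topology}"
  assumes [measurable]: "f \<in> borel_measurable borel" and c: "c \<noteq> 0"
  shows "integrable lborel (\<lambda>x. f (c *\<^sub>R x)) \<longleftrightarrow> integrable lborel f"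
proof -
  have "integrable lborel f \<longleftrightarrow>
      integrable (density (distr lborel borel (\<lambda>x. c *\<^sub>R x)) (\<lambda>_. ennreal (\<bar>c\<bar> ^ DIM('a)))) f"
    by (subst lborel_eq_density_distr_scaleR[OF c]) (rule refl)
  also have "\<dots> \<longleftrightarrow> integrable (distr lborel borel (\<lambda>x. c *\<^sub>R x)) (\<lambda>x. (\<bar>c\<bar> ^ DIM('a)) *\<^sub>R f x)"
    by (rule integrable_density) auto
  also have "\<dots> \<longleftrightarrow> integrable lborel (\<lambda>x. (\<bar>c\<bar> ^ DIM('a)) *\<^sub>R f (c *\<^sub>R x))"
    by (rule integrable_distr_eq) auto
  also have "\<dots> \<longleftrightarrow> integrable lborel (\<lambda>x. f (c *\<^sub>R x))"
    using c by (intro integrable_scaleR_iff) simp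
  finally show ?thesis ..
qed

lemma integral_dilation:
  fixes f :: "'a::euclidean_space \<Rightarrow> real"
  assumes [measurable]: "f \<in> borel_measurable borel" and c: "c \<noteq> 0"
  shows "(\<integral>x. f (c *\<^sub>R x) \<partial>lborel) = (\<integral>x. f x \<partial>lborel) / \<bar>c\<bar> ^ DIM('a)"
proof -
  have "(\<integral>x. f x \<partial>lborel) =
      integral\<^sup>L (density (distr lborel borel (\<lambda>x. c *\<^sub>R x)) (\<lambda>_. ennreal (\<bar>c\<bar> ^ DIM('a)))) f"
    by (subst lborel_eq_density_distr_scaleR[OF c]) (rule refl)
  also have "\<dots> = integral\<^sup>L (distr lborel borel (\<lambda>x. c *\<^sub>R x)) (\<lambda>x. \<bar>c\<bar> ^ DIM('a) *\<^sub>R f x)"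
    by (rule integral_density) auto
  also have "\<dots> = (\<integral>x. \<bar>c\<bar> ^ DIM('a) *\<^sub>R f (c *\<^sub>R x) \<partial>lborel)"
    by (rule integral_distr) auto
  finally show ?thesis
    using c by simp
qed

lemma set_integrable_dilation:
  fixes f :: "'a::euclidean_space \<Rightarrow> 'b::{banach, second_countable_topology}"
  assumes [measurable]: "f \<in> borel_measurable borel" and t: "t \<noteq> 0" and K: "compact K"
    and "set_integrable lborel ((\<lambda>x. t *\<^sub>R x) ` K) f"
  shows "set_integrable lborel K (\<lambda>x. f (t *\<^sub>R x))"
proof -
  have [measurable]: "(\<lambda>x. t *\<^sub>R x) ` K \<in> sets borel"
    by (simp add: borel_closed compact_imp_closed compact_scaling[OF K])
  have "indicator ((\<lambda>x. t *\<^sub>R x) ` K) (t *\<^sub>R x) = (indicator K x :: real)" for x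
    using t by (auto simp: indicator_def image_iff)
  then show ?thesis
    using assms(4) t unfolding set_integrable_def
    by (subst (asm) integrable_dilation_iff[symmetric, where c = t]) auto
qed

section \<open>Weak gradients\<close>

lemma test_fn_compose_scaleR:
  assumes "test_fn \<phi>" "c \<noteq> 0"
  shows "test_fn (\<lambda>x. \<phi> (c *\<^sub>R x))"
proof -
  have "{x. \<phi> (c *\<^sub>R x) \<noteq> 0} = (\<lambda>x. (1 / c) *\<^sub>R x) ` {x. \<phi> x \<noteq> 0}"
    using assms(2) by (auto simp: image_iff intro!: exI[where x = "c *\<^sub>R x" for x])
  then show ?thesis
    using assms by (simp add: test_fn_def smooth_fn_compose_scaleR bounded_scaling)
qed

lemma weak_grad_dilation:
  assumes t: "t > 0" and wg: "weak_grad u g"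
    and [measurable]: "u \<in> borel_measurable borel" "g \<in> borel_measurable borel"
  shows "weak_grad (\<lambda>x. c * u (t *\<^sub>R x)) (\<lambda>x. (c * t) *\<^sub>R g (t *\<^sub>R x))"
  unfolding weak_grad_def
proof (intro conjI allI impI ballI)
  fix K :: "R3 set"
  assume K: "compact K"
  have "set_integrable lborel ((\<lambda>x. t *\<^sub>R x) ` K) u" "set_integrable lborel ((\<lambda>x. t *\<^sub>R x) ` K) g"
    using wg compact_scaling[OF K] by (auto simp: weak_grad_def)
  then have "set_integrable lborel K (\<lambda>x. u (t *\<^sub>R x))" "set_integrable lborel K (\<lambda>x. g (t *\<^sub>R x))"
    using t K by (auto intro!: set_integrable_dilation)
  then have u: "integrable lborel (\<lambda>x. indicator K x * u (t *\<^sub>R x))"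
    and g: "integrable lborel (\<lambda>x. indicator K x *\<^sub>R g (t *\<^sub>R x))"
    unfolding set_integrable_def by simp_all
  have "integrable lborel (\<lambda>x. c * (indicator K x * u (t *\<^sub>R x)))"
    using u by (rule integrable_mult_right)
  then show "set_integrable lborel K (\<lambda>x. c * u (t *\<^sub>R x))"
    by (simp add: set_integrable_def ac_simps)
  have "integrable lborel (\<lambda>x. (c * t) *\<^sub>R (indicator K x *\<^sub>R g (t *\<^sub>R x)))"
    using g by (rule integrable_scaleR_right)
  then show "set_integrable lborel K (\<lambda>x. (c * t) *\<^sub>R g (t *\<^sub>R x))"
    by (simp add: set_integrable_def ac_simps)
next
  fix \<phi> :: "R3 \<Rightarrow> real" and i :: R3
  assume \<phi>: "test_fn \<phi>" and i: "i \<in> Basis"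
  define \<psi> where "\<psi> y = \<phi> ((1 / t) *\<^sub>R y)" for y
  have \<psi>: "test_fn \<psi>"
    unfolding \<psi>_def[abs_def] using \<phi> t by (intro test_fn_compose_scaleR) auto
  have smooth: "smooth_fn \<phi>" "smooth_fn \<psi>"
    using \<phi> \<psi> by (auto simp: test_fn_def)
  note [measurable] = smooth_fn_borel_measurable[OF smooth(1)] smooth_fn_borel_measurable[OF smooth(2)]
  have d\<psi>: "frechet_derivative \<psi> (at (t *\<^sub>R x)) i = (1 / t) * frechet_derivative \<phi> (at x) i" for x
    unfolding \<psi>_def using t smooth_fnD(1)[OF smooth(1)] by (simp add: frechet_derivative_compose_scaleR)
  have "(\<integral>y. u y * frechet_derivative \<psi> (at y) i \<partial>lborel) =
      t ^ 3 * (\<integral>x. u (t *\<^sub>R x) * frechet_derivative \<psi> (at (t *\<^sub>R x)) i \<partial>lborel)"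
    using integral_dilation[of "\<lambda>y. u y * frechet_derivative \<psi> (at y) i" t] t smooth(2) by simp
  also have "\<dots> = t ^ 3 * (\<integral>x. (1 / t) * (u (t *\<^sub>R x) * frechet_derivative \<phi> (at x) i) \<partial>lborel)"
    by (simp add: d\<psi> ac_simps)
  also have "\<dots> = t\<^sup>2 * (\<integral>x. u (t *\<^sub>R x) * frechet_derivative \<phi> (at x) i \<partial>lborel)"
    using t by (simp add: power2_eq_square power3_eq_cube)
  finally have lhs: "(\<integral>y. u y * frechet_derivative \<psi> (at y) i \<partial>lborel) =
      t\<^sup>2 * (\<integral>x. u (t *\<^sub>R x) * frechet_derivative \<phi> (at x) i \<partial>lborel)" .
  have "(\<integral>y. (g y \<bullet> i) * \<psi> y \<partial>lborel) = t ^ 3 * (\<integral>x. (g (t *\<^sub>R x) \<bullet> i) * \<phi> x \<partial>lborel)"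
    using integral_dilation[of "\<lambda>y. (g y \<bullet> i) * \<psi> y" t] t by (simp add: \<psi>_def)
  moreover have "(\<integral>y. u y * frechet_derivative \<psi> (at y) i \<partial>lborel) = - (\<integral>y. (g y \<bullet> i) * \<psi> y \<partial>lborel)"
    using wg \<psi> i unfolding weak_grad_def by blast
  ultimately have "t\<^sup>2 * (\<integral>x. u (t *\<^sub>R x) * frechet_derivative \<phi> (at x) i \<partial>lborel) =
      t\<^sup>2 * (- t * (\<integral>x. (g (t *\<^sub>R x) \<bullet> i) * \<phi> x \<partial>lborel))"
    unfolding lhs by (simp add: power2_eq_square power3_eq_cube)
  then have "(\<integral>x. u (t *\<^sub>R x) * frechet_derivative \<phi> (at x) i \<partial>lborel) =
      - t * (\<integral>x. (g (t *\<^sub>R x) \<bullet> i) * \<phi> x \<partial>lborel)"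
    using t by (subst (asm) mult_left_cancel) simp_all
  then show "(\<integral>x. c * u (t *\<^sub>R x) * frechet_derivative \<phi> (at x) i \<partial>lborel) =
      - (\<integral>x. (((c * t) *\<^sub>R g (t *\<^sub>R x)) \<bullet> i) * \<phi> x \<partial>lborel)"
    by (simp add: mult.assoc)
qed

lemma integrable_indicator_cbox_inner_weak_grad:
  assumes "weak_grad u g"
  shows "integrable lborel (\<lambda>x. indicator (cbox a b) x * (g x \<bullet> i))"
proof -
  have "set_integrable lborel (cbox a b) g"
    using assms by (simp add: weak_grad_def)
  then have "integrable lborel (\<lambda>x. (indicator (cbox a b) x *\<^sub>R g x) \<bullet> i)"
    unfolding set_integrable_def by (rule integrable_inner_left)
  then show ?thesis by simp
qed

lemma weak_grad_unique:
  assumes wg: "weak_grad u g" "weak_grad u g'"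
    and [measurable]: "g \<in> borel_measurable borel" "g' \<in> borel_measurable borel"
  shows "AE x in lborel. g x = g' x"
proof -
  have "AE x in lborel. (g x - g' x) \<bullet> i = 0" if i: "i \<in> Basis" for i
  proof (rule AE_eq_0_if_box_integrals_eq_0)
    have local: "integrable lborel (\<lambda>x. indicator (cbox a b) x * ((g x - g' x) \<bullet> i))" for a b
      using integrable_indicator_cbox_inner_weak_grad[OF wg(1)]
        integrable_indicator_cbox_inner_weak_grad[OF wg(2)]
      by (simp add: inner_diff_left right_diff_distrib)
    then show "integrable lborel (\<lambda>x. indicator (cbox a b) x * ((g x - g' x) \<bullet> i))" for a b .
    show "(\<integral>x. indicator (box a b) x * ((g x - g' x) \<bullet> i) \<partial>lborel) = 0" for a b :: R3
    proof -
      have integrable: "integrable lborel (\<lambda>x. (h x \<bullet> i) * box_bump n a b x)"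
        if "weak_grad u h" "h \<in> borel_measurable borel" for h n
        using that integrable_indicator_cbox_inner_weak_grad[OF that(1)]
        by (intro integrable_mult_box_bump) auto
      have by_parts: "(\<integral>x. u x * frechet_derivative (box_bump n a b) (at x) i \<partial>lborel) =
          - (\<integral>x. (h x \<bullet> i) * box_bump n a b x \<partial>lborel)" if "weak_grad u h" for h n
        using that test_fn_box_bump i unfolding weak_grad_def by blast
      have "(\<integral>x. ((g x - g' x) \<bullet> i) * box_bump n a b x \<partial>lborel) = 0" for n
        using by_parts[OF wg(1), of n] by_parts[OF wg(2), of n]
          integrable[OF wg(1), of n] integrable[OF wg(2), of n]
        by (simp add: inner_diff_left left_diff_distrib)
      moreover have "(\<lambda>n. \<integral>x. ((g x - g' x) \<bullet> i) * box_bump n a b x \<partial>lborel) \<longlonglongrightarrow>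
          (\<integral>x. indicator (box a b) x * ((g x - g' x) \<bullet> i) \<partial>lborel)"
        using local by (intro integral_mult_box_bump_tendsto) auto
      ultimately show ?thesis
        using LIMSEQ_unique[OF _ tendsto_const] by simp
    qed
  qed auto
  then have "AE x in lborel. \<forall>i\<in>Basis. (g x - g' x) \<bullet> i = 0"
    by (rule AE_finite_allI[OF finite_Basis])
  then show ?thesis
    by eventually_elim (simp add: euclidean_all_zero_iff)
qed

lemma grad_weak_grad:
  assumes "D12 u"
  shows "weak_grad u (grad u)" "grad u \<in> borel_measurable borel"
    "integrable lborel (\<lambda>x. (norm (grad u x))\<^sup>2)"
proof -
  have "\<exists>g. weak_grad u g \<and> g \<in> borel_measurable lborel \<and> integrable lborel (\<lambda>x. (norm (g x))\<^sup>2)"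
    using assms by (simp add: D12_def)
  then have "weak_grad u (grad u) \<and> grad u \<in> borel_measurable lborel \<and>
      integrable lborel (\<lambda>x. (norm (grad u x))\<^sup>2)"
    unfolding grad_def by (rule someI_ex)
  then show "weak_grad u (grad u)" "grad u \<in> borel_measurable borel"
    "integrable lborel (\<lambda>x. (norm (grad u x))\<^sup>2)"
    by auto
qed

lemma grad_sq_eq_integral_weak_grad:
  assumes "D12 u" "weak_grad u g" "g \<in> borel_measurable borel"
  shows "grad_sq u = (\<integral>x. (norm (g x))\<^sup>2 \<partial>lborel)"
proof -
  have "AE x in lborel. grad u x = g x"
    using assms grad_weak_grad[OF assms(1)] by (intro weak_grad_unique) auto
  then show ?thesis
    unfolding grad_sq_def using assms(3) grad_weak_grad(2)[OF assms(1)]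
    by (intro integral_cong_AE) (auto elim: eventually_mono)
qed

lemma D12_dilation:
  assumes t: "t > 0" and u: "D12 u"
  shows "D12 (\<lambda>x. c * u (t *\<^sub>R x))"
proof -
  have [measurable]: "u \<in> borel_measurable borel" "grad u \<in> borel_measurable borel"
    using u grad_weak_grad[OF u] by (auto simp: D12_def)
  have "integrable lborel (\<lambda>x. \<bar>u (t *\<^sub>R x)\<bar> ^ 6)"
    using t u by (subst integrable_dilation_iff[where f = "\<lambda>x. \<bar>u x\<bar> ^ 6"]) (auto simp: D12_def)
  then have "integrable lborel (\<lambda>x. \<bar>c * u (t *\<^sub>R x)\<bar> ^ 6)"
    by (simp add: abs_mult power_mult_distrib)
  moreover have "integrable lborel (\<lambda>x. (norm (grad u (t *\<^sub>R x)))\<^sup>2)"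
    using t grad_weak_grad(3)[OF u]
    by (subst integrable_dilation_iff[where f = "\<lambda>x. (norm (grad u x))\<^sup>2"]) auto
  then have "integrable lborel (\<lambda>x. (norm ((c * t) *\<^sub>R grad u (t *\<^sub>R x)))\<^sup>2)"
    by (simp add: power_mult_distrib)
  moreover have "weak_grad (\<lambda>x. c * u (t *\<^sub>R x)) (\<lambda>x. (c * t) *\<^sub>R grad u (t *\<^sub>R x))"
    using t grad_weak_grad(1)[OF u] by (intro weak_grad_dilation) auto
  ultimately show ?thesis
    unfolding D12_def by (intro conjI exI[where x = "\<lambda>x. (c * t) *\<^sub>R grad u (t *\<^sub>R x)"]) auto
qed

lemma grad_sq_dilation:
  assumes t: "t > 0" and u: "D12 u"
  shows "grad_sq (\<lambda>x. c * u (t *\<^sub>R x)) = c\<^sup>2 / t * grad_sq u"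
proof -
  have [measurable]: "u \<in> borel_measurable borel" "grad u \<in> borel_measurable borel"
    using u grad_weak_grad[OF u] by (auto simp: D12_def)
  have "grad_sq (\<lambda>x. c * u (t *\<^sub>R x)) = (\<integral>x. (norm ((c * t) *\<^sub>R grad u (t *\<^sub>R x)))\<^sup>2 \<partial>lborel)"
    using t grad_weak_grad(1)[OF u] D12_dilation[OF t u]
    by (intro grad_sq_eq_integral_weak_grad weak_grad_dilation) auto
  also have "\<dots> = (c * t)\<^sup>2 * (\<integral>x. (norm (grad u (t *\<^sub>R x)))\<^sup>2 \<partial>lborel)"
    by (simp add: power_mult_distrib)
  also have "\<dots> = (c * t)\<^sup>2 * (grad_sq u / t ^ 3)"
    using t unfolding grad_sq_def
    by (subst integral_dilation[where f = "\<lambda>x. (norm (grad u x))\<^sup>2"]) auto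
  also have "\<dots> = c\<^sup>2 / t * grad_sq u"
    using t by (simp add: field_simps power2_eq_square power3_eq_cube)
  finally show ?thesis .
qed

section \<open>The kernels\<close>

lemma Kern_nonneg: "a > 0 \<Longrightarrow> 0 \<le> Kern a d"
  by (simp add: Kern_def)

lemma KernJ_nonneg:
  assumes "a > 0"
  shows "0 \<le> KernJ a d"
proof -
  define s where "s = norm d / a"
  have s: "s \<ge> 0" using assms by (simp add: s_def)
  have "(1 + s / 3) * exp (- s) \<le> (1 + s) * exp (- s)"
    using s by (intro mult_right_mono) auto
  also have "\<dots> \<le> 1"
    using exp_ge_add_one_self[of s] by (simp add: exp_minus field_simps)
  finally show ?thesis
    unfolding KernJ_def using assms by (intro divide_nonneg_nonneg) (auto simp: s_def algebra_simps)
qed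

lemma KernJ_le_Kern: "a > 0 \<Longrightarrow> KernJ a d \<le> Kern a d"
  unfolding KernJ_def Kern_def by (intro divide_right_mono) auto

lemma Kern_dilation: "t > 0 \<Longrightarrow> Kern a ((1 / t) *\<^sub>R d) = t * Kern (t * a) d"
  by (cases "d = 0") (auto simp: Kern_def field_simps)

text \<open>With \<open>s = |d| / a\<close>, \<open>|d|\<close> times the combination equals
  \<open>t^3 exp (- s/t) - exp (- s) (t^3 + (t^3 - 1) s / 3)\<close>; the tangent bound
  \<open>exp (s - s/t) \<ge> 1 + s - s/t\<close> reduces it to \<open>exp (- s) s (t - 1)^2 (2 t + 1) / 3 \<ge> 0\<close>.\<close>

lemma Kern_combination_nonneg:
  assumes a: "a > 0" and t: "t > 0"
  shows "0 \<le> Kern a d - t ^ 3 * Kern (t * a) d - (1 - t ^ 3) * KernJ a d"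
proof (cases "d = 0")
  case False
  define s where "s = norm d / a"
  define E where "E = exp (- s)"
  have s: "s > 0" and E: "E > 0"
    using a False by (simp_all add: s_def E_def)
  have "E * (1 + (s - s / t)) \<le> E * exp (s - s / t)"
    using E by (intro mult_left_mono) auto
  also have "\<dots> = exp (- s / t)"
    by (simp add: E_def flip: exp_add)
  finally have tangent: "t ^ 3 * (E * (1 + (s - s / t))) \<le> t ^ 3 * exp (- s / t)"
    using t by (intro mult_left_mono) auto
  have "0 \<le> E * s / 3 * ((t - 1)\<^sup>2 * (2 * t + 1))"
    using E s t by simp
  also have "\<dots> = t ^ 3 * (E * (1 + (s - s / t))) + s / 3 * E - t ^ 3 * E - t ^ 3 * (s / 3) * E"
    using t by (simp add: field_simps power2_eq_square power3_eq_cube)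
  also have "\<dots> \<le> t ^ 3 * exp (- s / t) + s / 3 * E - t ^ 3 * E - t ^ 3 * (s / 3) * E"
    using tangent by linarith
  also have "\<dots> = norm d * (Kern a d - t ^ 3 * Kern (t * a) d - (1 - t ^ 3) * KernJ a d)"
    using a t False by (simp add: Kern_def KernJ_def s_def E_def field_simps)
  finally show ?thesis
    using False by (simp add: zero_le_mult_iff)
qed (simp add: Kern_def KernJ_def)

lemma Kern_dilation_le:
  assumes a: "a > 0" and t: "t > 0"
  shows "t ^ 3 * Kern (t * a) d \<le> max 1 (t ^ 3) * Kern a d"
proof (cases "t \<le> 1")
  case True
  then have t3: "t ^ 3 \<le> 1"
    using t by (simp add: power_le_one)
  then have "0 \<le> (1 - t ^ 3) * KernJ a d"
    using KernJ_nonneg[OF a] by simp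
  then show ?thesis
    using Kern_combination_nonneg[OF a t, of d] by (simp add: max_absorb1[OF t3])
next
  case False
  then have "exp (- (norm d / a)) \<le> exp (- (norm d / (t * a)))"
    using a False mult_right_mono[of 1 t "norm d"] by (auto simp: field_simps)
  then have "Kern (t * a) d \<le> Kern a d"
    unfolding Kern_def by (intro divide_right_mono) auto
  then show ?thesis
    using False by (auto simp: max_def intro!: mult_left_mono)
qed

lemma borel_measurable_Kern [measurable]: "Kern a \<in> borel_measurable borel"
  unfolding Kern_def[abs_def] by measurable

lemma borel_measurable_KernJ [measurable]: "KernJ a \<in> borel_measurable borel"
  unfolding KernJ_def[abs_def] by measurable

lemma integral_Kern_combination_nonneg:
  fixes \<delta> :: "'b \<Rightarrow> R3" and w :: "'b \<Rightarrow> real"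
  assumes a: "a > 0" and t: "t > 0"
    and [measurable]: "\<delta> \<in> borel_measurable M" "w \<in> borel_measurable M"
    and w: "\<And>z. 0 \<le> w z" and int: "integrable M (\<lambda>z. Kern a (\<delta> z) * w z)"
  shows "(1 - t ^ 3) * (\<integral>z. KernJ a (\<delta> z) * w z \<partial>M)
    \<le> (\<integral>z. Kern a (\<delta> z) * w z \<partial>M) - t ^ 3 * (\<integral>z. Kern (t * a) (\<delta> z) * w z \<partial>M)"
proof -
  have intJ: "integrable M (\<lambda>z. (1 - t ^ 3) * (KernJ a (\<delta> z) * w z))"
    using int by (intro integrable_mult_right, rule Bochner_Integration.integrable_bound)
      (auto intro!: mult_right_mono KernJ_le_Kern simp: a w abs_mult KernJ_nonneg Kern_nonneg)
  have intD: "integrable M (\<lambda>z. t ^ 3 * (Kern (t * a) (\<delta> z) * w z))"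
  proof (rule Bochner_Integration.integrable_bound)
    show "integrable M (\<lambda>z. max 1 (t ^ 3) * (Kern a (\<delta> z) * w z))"
      using int by (rule integrable_mult_right)
    show "AE z in M. norm (t ^ 3 * (Kern (t * a) (\<delta> z) * w z)) \<le> norm (max 1 (t ^ 3) * (Kern a (\<delta> z) * w z))"
      using Kern_dilation_le[OF a t] Kern_nonneg[OF a] Kern_nonneg[of "t * a"] a t w
      by (intro AE_I2) (auto simp: abs_mult mult.assoc[symmetric] intro!: mult_right_mono)
  qed simp
  have "Kern a (\<delta> z) * w z - t ^ 3 * (Kern (t * a) (\<delta> z) * w z) - (1 - t ^ 3) * (KernJ a (\<delta> z) * w z)
      = (Kern a (\<delta> z) - t ^ 3 * Kern (t * a) (\<delta> z) - (1 - t ^ 3) * KernJ a (\<delta> z)) * w z" for z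
    by (simp add: algebra_simps)
  then have "0 \<le> (\<integral>z. Kern a (\<delta> z) * w z - t ^ 3 * (Kern (t * a) (\<delta> z) * w z)
      - (1 - t ^ 3) * (KernJ a (\<delta> z) * w z) \<partial>M)"
    using Kern_combination_nonneg[OF a t] w by (intro integral_nonneg_AE AE_I2) simp
  also have "\<dots> = (\<integral>z. Kern a (\<delta> z) * w z \<partial>M) - t ^ 3 * (\<integral>z. Kern (t * a) (\<delta> z) * w z \<partial>M)
      - (1 - t ^ 3) * (\<integral>z. KernJ a (\<delta> z) * w z \<partial>M)"
    using int intD intJ by simp
  finally show ?thesis by simp
qed

section \<open>The energy under dilation\<close>

lemma Lp_pow_dilation:
  assumes t: "t > 0" and [measurable]: "u \<in> borel_measurable borel"
  shows "Lp_pow p (\<lambda>x. c * u (t *\<^sub>R x)) = \<bar>c\<bar> powr p / t ^ 3 * Lp_pow p u"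
proof -
  have "Lp_pow p (\<lambda>x. c * u (t *\<^sub>R x)) = \<bar>c\<bar> powr p * (\<integral>x. \<bar>u (t *\<^sub>R x)\<bar> powr p \<partial>lborel)"
    unfolding Lp_pow_def by (simp add: abs_mult powr_mult)
  also have "\<dots> = \<bar>c\<bar> powr p / t ^ 3 * Lp_pow p u"
    unfolding Lp_pow_def using t by (subst integral_dilation[where f = "\<lambda>x. \<bar>u x\<bar> powr p"]) auto
  finally show ?thesis .
qed

lemma Vpot_mult: "Vpot a (\<lambda>x. c * f x) (\<lambda>x. c' * g x) = c * c' * Vpot a f g"
  unfolding Vpot_def by (simp add: ac_simps flip: integral_mult_right_zero)

lemma Vpot_dilation:
  assumes t: "t > 0" and [measurable]: "f \<in> borel_measurable borel" "g \<in> borel_measurable borel"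
  shows "Vpot a (\<lambda>x. f (t *\<^sub>R x)) (\<lambda>x. g (t *\<^sub>R x)) = Vpot (t * a) f g / t ^ 5"
proof -
  define H where "H w = Kern a ((1 / t) *\<^sub>R (fst w - snd w)) * f (fst w) * g (snd w)" for w :: "R3 \<times> R3"
  have "H \<in> borel_measurable (borel \<Otimes>\<^sub>M borel)"
    unfolding H_def[abs_def] by measurable
  then have [measurable]: "H \<in> borel_measurable borel"
    by (simp add: borel_prod)
  have "Vpot a (\<lambda>x. f (t *\<^sub>R x)) (\<lambda>x. g (t *\<^sub>R x)) = (\<integral>z. H (t *\<^sub>R z) \<partial>lborel)"
    unfolding Vpot_def lborel_prod H_def using t by (simp add: scaleR_diff_right[symmetric])
  also have "\<dots> = (\<integral>z. H z \<partial>lborel) / t ^ 6"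
    using t by (simp add: integral_dilation)
  also have "(\<integral>z. H z \<partial>lborel) = t * Vpot (t * a) f g"
    unfolding H_def Vpot_def lborel_prod using t by (simp add: Kern_dilation ac_simps)
  finally show ?thesis
    using t by (simp add: field_simps eval_nat_numeral)
qed

lemma I_a_dilation:
  assumes t: "t > 0" and u: "D12 u"
  shows "I_a a q p (\<lambda>x. t\<^sup>2 * u (t *\<^sub>R x)) =
    1/2 * (t ^ 3 * grad_sq u) + q\<^sup>2 / 4 * (t ^ 3 * Vpot (t * a) (\<lambda>x. (u x)\<^sup>2) (\<lambda>x. (u x)\<^sup>2))
      - 1/p * (t powr (2 * p - 3) * Lp_pow p u)"
proof -
  have [measurable]: "u \<in> borel_measurable borel"
    using u by (simp add: D12_def)
  have "Vpot a (\<lambda>x. (t\<^sup>2 * u (t *\<^sub>R x))\<^sup>2) (\<lambda>x. (t\<^sup>2 * u (t *\<^sub>R x))\<^sup>2) =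
      t ^ 4 * t ^ 4 * Vpot a (\<lambda>x. (u (t *\<^sub>R x))\<^sup>2) (\<lambda>x. (u (t *\<^sub>R x))\<^sup>2)"
    by (simp add: power_mult_distrib Vpot_mult)
  also have "\<dots> = t ^ 8 * (Vpot (t * a) (\<lambda>x. (u x)\<^sup>2) (\<lambda>x. (u x)\<^sup>2) / t ^ 5)"
    using t by (subst Vpot_dilation[where f = "\<lambda>x. (u x)\<^sup>2" and g = "\<lambda>x. (u x)\<^sup>2"]) auto
  also have "\<dots> = t ^ 3 * Vpot (t * a) (\<lambda>x. (u x)\<^sup>2) (\<lambda>x. (u x)\<^sup>2)"
    using t by (simp add: eval_nat_numeral field_simps)
  finally have "Vpot a (\<lambda>x. (t\<^sup>2 * u (t *\<^sub>R x))\<^sup>2) (\<lambda>x. (t\<^sup>2 * u (t *\<^sub>R x))\<^sup>2) =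
      t ^ 3 * Vpot (t * a) (\<lambda>x. (u x)\<^sup>2) (\<lambda>x. (u x)\<^sup>2)" .
  moreover have "\<bar>t\<^sup>2\<bar> powr p / t ^ 3 = t powr (2 * p - 3)"
  proof -
    have "\<bar>t\<^sup>2\<bar> = t powr 2" "t ^ 3 = t powr 3"
      using t powr_realpow[of t 2] powr_realpow[of t 3] by simp_all
    then show ?thesis
      by (simp only: powr_powr powr_diff mult.commute)
  qed
  moreover have "(t\<^sup>2)\<^sup>2 / t = t ^ 3"
    using t by (simp add: field_simps eval_nat_numeral)
  ultimately show ?thesis
    unfolding I_a_def using t u by (simp add: grad_sq_dilation Lp_pow_dilation)
qed

lemma powr_ge_tangent_at_1:
  fixes s \<alpha> :: real
  assumes s: "s > 0" and \<alpha>: "\<alpha> \<ge> 1"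
  shows "\<alpha> * (s - 1) \<le> s powr \<alpha> - 1"
proof -
  have "((\<lambda>x. x powr \<alpha>) has_real_derivative \<alpha> * 1 powr (\<alpha> - 1)) (at 1 within {0<..})"
    by (rule has_field_derivative_at_within[OF has_real_derivative_powr]) simp
  then have "(\<alpha> * 1 powr (\<alpha> - 1)) * (s - 1) \<le> s powr \<alpha> - 1 powr \<alpha>"
    by (intro convex_on_imp_above_tangent[OF powr_convex[OF \<alpha>]])
       (use s in \<open>auto simp: convex_connected interior_open\<close>)
  then show ?thesis by simp
qed

lemma dilation_powr_ge:
  fixes t p :: real
  assumes t: "t > 0" and p: "p \<ge> 3"
  shows "(2 * p - 3) / 3 * (t ^ 3 - 1) \<le> t powr (2 * p - 3) - 1"
proof -
  have "t ^ 3 = t powr 3"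
    using t powr_realpow[of t 3] by simp
  moreover have "3 * ((2 * p - 3) / 3) = 2 * p - 3"
    by simp
  ultimately have "(t ^ 3) powr ((2 * p - 3) / 3) = t powr (2 * p - 3)"
    by (simp only: powr_powr)
  then show ?thesis
    using powr_ge_tangent_at_1[of "t ^ 3" "(2 * p - 3) / 3"] t p by simp
qed

theorem lemma5p1:
  fixes a q p t :: real and u :: "R3 \<Rightarrow> real"
  assumes "a > 0" and "q \<noteq> 0" and "4 < p" and "p < 6"
    and "t > 0" and "Er a u"
  shows "I_a a q p u - I_a a q p (\<lambda>x. t\<^sup>2 * u (t *\<^sub>R x)) \<ge> (1 - t ^ 3) / 3 * J_a a q p u"
proof -
  have u: "D12 u" and [measurable]: "u \<in> borel_measurable borel"
    using \<open>Er a u\<close> by (auto simp: Er_def D12_def)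
  let ?w = "\<lambda>z::R3 \<times> R3. (u (fst z))\<^sup>2 * (u (snd z))\<^sup>2"
  let ?V = "\<lambda>K. \<integral>z. K (fst z - snd z) * ?w z \<partial>(lborel \<Otimes>\<^sub>M lborel)"
  have "integrable (lborel \<Otimes>\<^sub>M lborel) (\<lambda>z. Kern a (fst z - snd z) * ?w z)"
    using \<open>Er a u\<close> \<open>a > 0\<close> unfolding Er_def
    by (intro integrableI_nonneg) (auto simp: Kern_nonneg mult.assoc)
  then have coulomb: "(1 - t ^ 3) * ?V (KernJ a) \<le> ?V (Kern a) - t ^ 3 * ?V (Kern (t * a))"
    using \<open>a > 0\<close> \<open>t > 0\<close> by (intro integral_Kern_combination_nonneg) auto
  have nonlinear: "(2 * p - 3) / 3 * (t ^ 3 - 1) \<le> t powr (2 * p - 3) - 1"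
    using \<open>t > 0\<close> \<open>p > 4\<close> by (intro dilation_powr_ge) auto
  have "0 \<le> Lp_pow p u"
    unfolding Lp_pow_def by simp
  then have "0 \<le> q\<^sup>2 / 4 * (?V (Kern a) - t ^ 3 * ?V (Kern (t * a)) - (1 - t ^ 3) * ?V (KernJ a))
      + Lp_pow p u / p * (t powr (2 * p - 3) - 1 - (2 * p - 3) / 3 * (t ^ 3 - 1))"
    using coulomb nonlinear \<open>p > 4\<close> by (intro add_nonneg_nonneg mult_nonneg_nonneg) auto
  also have "\<dots> = I_a a q p u - I_a a q p (\<lambda>x. t\<^sup>2 * u (t *\<^sub>R x)) - (1 - t ^ 3) / 3 * J_a a q p u"
    using \<open>p > 4\<close> unfolding I_a_dilation[OF \<open>t > 0\<close> u] I_a_def J_a_def Vpot_def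
    by (simp add: mult.assoc field_simps)
  finally show ?thesis by simp
qed

end
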